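(* Let $u$ and $v$ be vertices of $G$ such that $u$ is neither an ancestor nor a descendant of $v$. Suppose the set $X$ of Case 3 of the routing algorithm (the vertices of $C_{T^u}$ that are ancestors of $v$ and not ancestors of $u$) is empty. Then the vertices visited when executing the routing steps of Case 3 a) lie on the path in $T$ from $u$ to $v$, and they are visited in the order in which they appear on this path.
   Context: Let $T$ be a rooted tree on $n$ vertices with positive edge weights; $P(a,b)$ is the path in $T$ from $a$ to $b$ and $\delta_T(a,b)$ its weight. Ancestor/descendant refer to $T$, and a vertex counts as its own ancestor and descendant; "deepest"/"highest" refer to depth in $T$. $T_v$ is the subtree of $T$ rooted at $v$. For every non-leaf vertex $v$ fix a child $c_1(v)$ with $|T_{c_1(v)}|$ maximal; edges $(v,c_1(v))$ are leftmost. A subtree $R$ of $T$ is rooted at its vertex closest to the root, $rt(R)$, and inherits the leftmost labelling; $R_v$ is the subtree of $R$ rooted at $v$. $P_R(v)$ is the longest downward path from $v$ in $R$ using only leftmost edges, with last vertex $l(v)$; $l(R):=l(rt(R))$. A vertex $v$ of $R$ is $d$-balanced if $|R_{c_1(v)}|\le |R|-d$ (with $|R_{c_1(v)}|=0$ if $c_1(v)$ is undefined or not in $R$); $b_d(v)$ is the first $d$-balanced vertex on $P_R(v)$, or NULL. $CV(R,d)=\emptyset$ if $b_d(rt(R))$ is NULL, else $\{b\}\cup\bigcup_w CV(R_w,d)$ with $b=b_d(rt(R))$ and $w$ ranging over children of $b$ in $R$. Fix an integer $k\ge4$; for a subtree $R$ with $m$ vertices, $C_R=V(R)$ if $k\ge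 m/2-1$, else $C_R=CV(R,m/k)\cup\{l(R),rt(R)\}$. Canonical subtrees: $T$ is canonical; if $R$ is canonical, each component of $R$ minus $C_R$ is canonical. Each vertex $v$ lies in $C_R$ for exactly one canonical $R$, denoted $T^v$. The spanner $G$ has vertex set $V(T)$ and edges: all edges of $T$, and all pairs of distinct vertices of $C_R$ for every canonical $R$; edge $(a,b)$ has weight $\delta_T(a,b)$. Routing algorithm from current vertex $u$ to destination $v$: Case 0: if $v$ is adjacent to $u$, move to $v$. Case 1: $u$ is an ancestor of $v$; let $X$ be the vertices of $C_{T^u}$ that are ancestors of $v$, $x$ the deepest; move to $x$, then to the child of $x$ that is an ancestor of $v$. Case 2: $u$ is a descendant of $v$; let $X$ be the vertices of $C_{T^u}$ that are descendants of $v$ and ancestors of $u$, $x$ the highest; move to $x$, then to the parent of $x$. Case 3: $u$ is neither; let $X$ be the vertices of $C_{T^u}$ that are ancestors of $v$ but not of $u$, and $Y$ those that are ancestors of $u$ but not of $v$, $y$ the highest vertex of $Y$. Case 3 a): $X=\emptyset$: move to $y$, then to the parent of $y$. Case 3 b): $X\neq\emptyset$: with $x$ the deepest vertex of $X$ and $x'$ the child of $x$ that is an ancestor of $v$, move to $x$, then to $x'$. (Moving to the current vertex means staying.) *)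

theory Defs
  imports Complex_Main "HOL-Library.Sublist"
begin

definition rooted_tree :: "'a set \<Rightarrow> 'a \<Rightarrow> ('a \<Rightarrow> 'a) \<Rightarrow> bool" where
  "rooted_tree V r par \<longleftrightarrow> finite V \<and> r \<in> V \<and> par r = r \<and>
     (\<forall>v\<in>V - {r}. par v \<in> V) \<and> (\<forall>v\<in>V. \<exists>n. (par ^^ n) v = r)"

definition anc :: "'a set \<Rightarrow> ('a \<Rightarrow> 'a) \<Rightarrow> 'a \<Rightarrow> 'a \<Rightarrow> bool" where
  "anc V par a b \<longleftrightarrow> b \<in> V \<and> (\<exists>n. (par ^^ n) b = a)"

definition depth :: "'a \<Rightarrow> ('a \<Rightarrow> 'a) \<Rightarrow> 'a \<Rightarrow> nat" where
  "depth r par v = (LEAST n. (par ^^ n) v = r)"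

definition children :: "'a set \<Rightarrow> 'a \<Rightarrow> ('a \<Rightarrow> 'a) \<Rightarrow> 'a \<Rightarrow> 'a set" where
  "children V r par v = {c \<in> V - {r}. par c = v}"

definition tsub :: "'a set \<Rightarrow> ('a \<Rightarrow> 'a) \<Rightarrow> 'a \<Rightarrow> 'a set" where
  "tsub V par v = {x \<in> V. anc V par v x}"

text \<open>c1 is a valid choice of leftmost (heavy) children.\<close>
definition heavy_choice :: "'a set \<Rightarrow> 'a \<Rightarrow> ('a \<Rightarrow> 'a) \<Rightarrow> ('a \<Rightarrow> 'a) \<Rightarrow> bool" where
  "heavy_choice V r par c1 \<longleftrightarrow> (\<forall>v\<in>V. children V r par v \<noteq> {} \<longrightarrow>
     c1 v \<in> children V r par v \<and>
     (\<forall>c\<in>children V r par v. card (tsub V par c) \<le> card (tsub V par (c1 v))))"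

text \<open>A subtree of T, given by its vertex set S (nonempty, connected in T).\<close>
definition is_subtree :: "'a set \<Rightarrow> ('a \<Rightarrow> 'a) \<Rightarrow> 'a set \<Rightarrow> bool" where
  "is_subtree V par S \<longleftrightarrow> S \<subseteq> V \<and> S \<noteq> {} \<and>
     (\<exists>\<rho>\<in>S. \<forall>x\<in>S. anc V par \<rho> x \<and> (\<forall>z. anc V par \<rho> z \<and> anc V par z x \<longrightarrow> z \<in> S))"

definition rt :: "'a set \<Rightarrow> ('a \<Rightarrow> 'a) \<Rightarrow> 'a set \<Rightarrow> 'a" where
  "rt V par S = (THE \<rho>. \<rho> \<in> S \<and> (\<forall>x\<in>S. anc V par \<rho> x))"

definition rsub :: "'a set \<Rightarrow> ('a \<Rightarrow> 'a) \<Rightarrow> 'a set \<Rightarrow> 'a \<Rightarrow> 'a set" where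
  "rsub V par S v = {x \<in> S. anc V par v x}"

text \<open>|R_{c1(v)}|, which is 0 if c1(v) is undefined (v a leaf of T) or not in R.\<close>
definition heavy_size :: "'a set \<Rightarrow> 'a \<Rightarrow> ('a \<Rightarrow> 'a) \<Rightarrow> ('a \<Rightarrow> 'a) \<Rightarrow> 'a set \<Rightarrow> 'a \<Rightarrow> nat" where
  "heavy_size V r par c1 S v =
     (if children V r par v = {} \<or> c1 v \<notin> S then 0 else card (rsub V par S (c1 v)))"

text \<open>(c1^^i) v is the i-th vertex of P_R(v) (vertex 0 is v).\<close>
definition onP :: "'a set \<Rightarrow> 'a \<Rightarrow> ('a \<Rightarrow> 'a) \<Rightarrow> ('a \<Rightarrow> 'a) \<Rightarrow> 'a set \<Rightarrow> 'a \<Rightarrow> nat \<Rightarrow> bool" where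
  "onP V r par c1 S v i \<longleftrightarrow>
     (\<forall>j\<le>i. (c1 ^^ j) v \<in> S \<and> (j < i \<longrightarrow> children V r par ((c1 ^^ j) v) \<noteq> {}))"

definition lv :: "'a set \<Rightarrow> 'a \<Rightarrow> ('a \<Rightarrow> 'a) \<Rightarrow> ('a \<Rightarrow> 'a) \<Rightarrow> 'a set \<Rightarrow> 'a \<Rightarrow> 'a" where
  "lv V r par c1 S v = (c1 ^^ (GREATEST i. onP V r par c1 S v i)) v"

definition balanced :: "'a set \<Rightarrow> 'a \<Rightarrow> ('a \<Rightarrow> 'a) \<Rightarrow> ('a \<Rightarrow> 'a) \<Rightarrow> 'a set \<Rightarrow> real \<Rightarrow> 'a \<Rightarrow> bool" where
  "balanced V r par c1 S d w \<longleftrightarrow> real (heavy_size V r par c1 S w) \<le> real (card S) - d"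

text \<open>b_d(v): first d-balanced vertex on P_R(v), None = NULL.\<close>
definition bd :: "'a set \<Rightarrow> 'a \<Rightarrow> ('a \<Rightarrow> 'a) \<Rightarrow> ('a \<Rightarrow> 'a) \<Rightarrow> 'a set \<Rightarrow> real \<Rightarrow> 'a \<Rightarrow> 'a option" where
  "bd V r par c1 S d v =
     (if \<exists>i. onP V r par c1 S v i \<and> balanced V r par c1 S d ((c1 ^^ i) v)
      then Some ((c1 ^^ (LEAST i. onP V r par c1 S v i \<and> balanced V r par c1 S d ((c1 ^^ i) v))) v)
      else None)"

inductive cv_mem :: "'a set \<Rightarrow> 'a \<Rightarrow> ('a \<Rightarrow> 'a) \<Rightarrow> ('a \<Rightarrow> 'a) \<Rightarrow> 'a set \<Rightarrow> real \<Rightarrow> 'a \<Rightarrow> bool"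
  for V r par c1 where
  cv_base: "bd V r par c1 S d (rt V par S) = Some b \<Longrightarrow> cv_mem V r par c1 S d b"
| cv_rec: "bd V r par c1 S d (rt V par S) = Some b \<Longrightarrow> w \<in> S \<Longrightarrow> w \<in> children V r par b \<Longrightarrow>
    cv_mem V r par c1 (rsub V par S w) d x \<Longrightarrow> cv_mem V r par c1 S d x"

definition CR :: "'a set \<Rightarrow> 'a \<Rightarrow> ('a \<Rightarrow> 'a) \<Rightarrow> ('a \<Rightarrow> 'a) \<Rightarrow> nat \<Rightarrow> 'a set \<Rightarrow> 'a set" where
  "CR V r par c1 k S =
     (if real k \<ge> real (card S) / 2 - 1 then S
      else {x. cv_mem V r par c1 S (real (card S) / real k) x}
           \<union> {lv V r par c1 S (rt V par S), rt V par S})"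

definition is_component :: "'a set \<Rightarrow> ('a \<Rightarrow> 'a) \<Rightarrow> 'a set \<Rightarrow> 'a set \<Rightarrow> bool" where
  "is_component V par A Q \<longleftrightarrow> Q \<subseteq> A \<and> is_subtree V par Q \<and>
     (\<forall>Q'. Q \<subseteq> Q' \<and> Q' \<subseteq> A \<and> is_subtree V par Q' \<longrightarrow> Q' = Q)"

inductive canonical :: "'a set \<Rightarrow> 'a \<Rightarrow> ('a \<Rightarrow> 'a) \<Rightarrow> ('a \<Rightarrow> 'a) \<Rightarrow> nat \<Rightarrow> 'a set \<Rightarrow> bool"
  for V r par c1 k where
  can_T: "canonical V r par c1 k V"
| can_comp: "canonical V r par c1 k S \<Longrightarrow> is_component V par (S - CR V r par c1 k S) Q \<Longrightarrow>
    canonical V r par c1 k Q"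

definition Tup :: "'a set \<Rightarrow> 'a \<Rightarrow> ('a \<Rightarrow> 'a) \<Rightarrow> ('a \<Rightarrow> 'a) \<Rightarrow> nat \<Rightarrow> 'a \<Rightarrow> 'a set" where
  "Tup V r par c1 k v = (THE S. canonical V r par c1 k S \<and> v \<in> CR V r par c1 k S)"

definition anc_list :: "'a \<Rightarrow> ('a \<Rightarrow> 'a) \<Rightarrow> 'a \<Rightarrow> 'a list" where
  "anc_list r par a = map (\<lambda>i. (par ^^ i) a) [0..<Suc (depth r par a)]"

text \<open>The path P(a,b) in T as the list of its vertices from a to b.\<close>
definition tpath :: "'a set \<Rightarrow> 'a \<Rightarrow> ('a \<Rightarrow> 'a) \<Rightarrow> 'a \<Rightarrow> 'a \<Rightarrow> 'a list" where
  "tpath V r par a b =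
     takeWhile (\<lambda>x. \<not> anc V par x b) (anc_list r par a)
     @ [hd (dropWhile (\<lambda>x. \<not> anc V par x b) (anc_list r par a))]
     @ rev (takeWhile (\<lambda>x. \<not> anc V par x a) (anc_list r par b))"

definition case3_X :: "'a set \<Rightarrow> 'a \<Rightarrow> ('a \<Rightarrow> 'a) \<Rightarrow> ('a \<Rightarrow> 'a) \<Rightarrow> nat \<Rightarrow> 'a \<Rightarrow> 'a \<Rightarrow> 'a set" where
  "case3_X V r par c1 k u v =
     {x \<in> CR V r par c1 k (Tup V r par c1 k u). anc V par x v \<and> \<not> anc V par x u}"

definition case3_Y :: "'a set \<Rightarrow> 'a \<Rightarrow> ('a \<Rightarrow> 'a) \<Rightarrow> ('a \<Rightarrow> 'a) \<Rightarrow> nat \<Rightarrow> 'a \<Rightarrow> 'a \<Rightarrow> 'a set" where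
  "case3_Y V r par c1 k u v =
     {y \<in> CR V r par c1 k (Tup V r par c1 k u). anc V par y u \<and> \<not> anc V par y v}"

definition case3_y :: "'a set \<Rightarrow> 'a \<Rightarrow> ('a \<Rightarrow> 'a) \<Rightarrow> ('a \<Rightarrow> 'a) \<Rightarrow> nat \<Rightarrow> 'a \<Rightarrow> 'a \<Rightarrow> 'a" where
  "case3_y V r par c1 k u v =
     (THE y. y \<in> case3_Y V r par c1 k u v \<and>
        (\<forall>y'\<in>case3_Y V r par c1 k u v. depth r par y \<le> depth r par y'))"

end

theory Submission
  imports Defs
begin

text \<open>
The vertex y of Case 3 a) is the highest vertex of C_{T^u} that is an ancestor of u but not of v.
Such vertices exist because u itself lies in C_{T^u}; for this, T^u must be well defined, which
holds because canonical subtrees are laminar in a strong sense: two of them are equal, disjoint,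
or one of them lies in the other minus its set C_R. Since y is an ancestor of u but not of v,
the path P(u,v) starts by climbing from u through y to the parent of y, so u, y and the parent
of y occur on it in this order.
\<close>

lemma subseq_remdups_adj: "subseq (remdups_adj xs) xs"
  by (induction xs rule: remdups_adj.induct) auto

lemma subseq_remdups_adj_map_upt:
  "subseq (remdups_adj [f 0, f m, f (Suc m)]) (map f [0..<Suc (Suc m)])"
proof (cases m)
  case 0
  then show ?thesis using subseq_remdups_adj[of "[f 0, f 1]"] by simp
next
  case (Suc m')
  then have "[0..<m] = 0 # [1..<m]" by (simp add: upt_conv_Cons del: upt_Suc)
  then have "map f [0..<Suc (Suc m)] = f 0 # map f [1..<m] @ [f m, f (Suc m)]" by simp
  moreover have "subseq [f m, f (Suc m)] (map f [1..<m] @ [f m, f (Suc m)])"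
    by (rule list_emb_append2) simp
  ultimately have "subseq [f 0, f m, f (Suc m)] (map f [0..<Suc (Suc m)])" by simp
  then show ?thesis using subseq_remdups_adj subseq_order.trans by blast
qed

lemma prefix_takeWhile_hd_dropWhile:
  assumes "\<forall>x\<in>set xs. P x"
  shows "prefix (xs @ [z]) (takeWhile P (xs @ z # ys) @ [hd (dropWhile P (xs @ z # ys))] @ zs)"
  using assms by (cases "P z") simp_all

section \<open>Trees given by a parent function\<close>

lemma anc_trans: "anc V par a b \<Longrightarrow> anc V par b c \<Longrightarrow> anc V par a c"
  unfolding anc_def by (metis funpow_add comp_apply)

locale parent_tree =
  fixes V :: "'a set" and r :: 'a and par :: "'a \<Rightarrow> 'a"
  assumes tree: "rooted_tree V r par"
begin

lemma finite_V: "finite V" and root_in: "r \<in> V" and par_root: "par r = r"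
  and reaches_root: "x \<in> V \<Longrightarrow> \<exists>n. (par ^^ n) x = r"
  using tree unfolding rooted_tree_def by auto

lemma par_in: "x \<in> V \<Longrightarrow> par x \<in> V"
  using tree unfolding rooted_tree_def by (cases "x = r") auto

lemma funpow_par_in: "x \<in> V \<Longrightarrow> (par ^^ n) x \<in> V"
  by (induction n) (auto simp: par_in)

lemma funpow_par_root: "(par ^^ n) r = r"
  by (induction n) (auto simp: par_root)

lemma funpow_par_root_mono:
  assumes "(par ^^ n) x = r" "n \<le> m"
  shows "(par ^^ m) x = r"
proof -
  have "(par ^^ m) x = (par ^^ (m - n)) ((par ^^ n) x)"
    using assms(2) by (metis funpow_add comp_apply le_add_diff_inverse2)
  then show ?thesis using assms(1) funpow_par_root by simp
qed

lemma depth_root: "depth r par r = 0"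
  unfolding depth_def by simp

lemma funpow_depth: "x \<in> V \<Longrightarrow> (par ^^ depth r par x) x = r"
  unfolding depth_def using reaches_root by (rule LeastI_ex)

lemma depth_eq_0_iff: "x \<in> V \<Longrightarrow> depth r par x = 0 \<longleftrightarrow> x = r"
  using funpow_depth depth_root by fastforce

lemma depth_par:
  assumes "x \<in> V" "x \<noteq> r"
  shows "depth r par x = Suc (depth r par (par x))"
proof -
  have "(LEAST n. (par ^^ n) x = r) = Suc (LEAST n. (par ^^ Suc n) x = r)"
    using funpow_depth[OF assms(1)] assms(2) by (intro Least_Suc) auto
  then show ?thesis unfolding depth_def by (simp only: funpow_Suc_right comp_apply)
qed

lemma depth_funpow_par:
  assumes "x \<in> V" "n \<le> depth r par x"
  shows "depth r par ((par ^^ n) x) = depth r par x - n"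
  using assms(2)
proof (induction n)
  case (Suc n)
  let ?y = "(par ^^ n) x"
  have "depth r par ?y > 0" using Suc by simp
  then have "?y \<noteq> r" using depth_root by auto
  then show ?case using Suc depth_par[of ?y] funpow_par_in[OF assms(1)] by simp
qed simp

lemma anc_in: "anc V par a b \<Longrightarrow> a \<in> V \<and> b \<in> V"
  unfolding anc_def using funpow_par_in by blast

lemma anc_refl: "x \<in> V \<Longrightarrow> anc V par x x"
  unfolding anc_def by (metis funpow_0)

lemma anc_root: "x \<in> V \<Longrightarrow> anc V par r x"
  unfolding anc_def using reaches_root by blast

lemma anc_depth_less:
  assumes "anc V par a b" "a \<noteq> b"
  shows "depth r par a < depth r par b"
proof -
  obtain n where n: "(par ^^ n) b = a" and b: "b \<in> V"
    using assms(1) unfolding anc_def by blast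
  show ?thesis
  proof (cases "n \<le> depth r par b")
    case True
    moreover have "n > 0" using n assms(2) by (cases n) auto
    ultimately show ?thesis using depth_funpow_par[OF b True] n by simp
  next
    case False
    then have "a = r" using funpow_par_root_mono[OF funpow_depth[OF b]] n by simp
    then show ?thesis using assms(2) depth_root depth_eq_0_iff[OF b] by auto
  qed
qed

lemma anc_antisym: "anc V par a b \<Longrightarrow> anc V par b a \<Longrightarrow> a = b"
  using anc_depth_less by (metis less_asym)

lemma anc_linear:
  assumes "anc V par a x" "anc V par b x"
  shows "anc V par a b \<or> anc V par b a"
proof -
  obtain m n where m: "(par ^^ m) x = a" and n: "(par ^^ n) x = b" and x: "x \<in> V"
    using assms unfolding anc_def by blast
  have "(par ^^ (n - m)) a = b" if "m \<le> n"
    using that m n by (metis funpow_add comp_apply le_add_diff_inverse2)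
  moreover have "(par ^^ (m - n)) b = a" if "n \<le> m"
    using that m n by (metis funpow_add comp_apply le_add_diff_inverse2)
  ultimately show ?thesis
    unfolding anc_def using m n x funpow_par_in by (meson nat_le_linear)
qed

lemma ex1_highest_ancestor:
  assumes "y \<in> Y" "\<forall>y\<in>Y. anc V par y u"
  shows "\<exists>!y. y \<in> Y \<and> (\<forall>y'\<in>Y. depth r par y \<le> depth r par y')"
proof (rule ex_ex1I)
  show "\<exists>y. y \<in> Y \<and> (\<forall>y'\<in>Y. depth r par y \<le> depth r par y')"
    using ex_has_least_nat[of "\<lambda>y. y \<in> Y", OF assms(1)] by blast
next
  fix y1 y2
  assume y1: "y1 \<in> Y \<and> (\<forall>y'\<in>Y. depth r par y1 \<le> depth r par y')"
    and y2: "y2 \<in> Y \<and> (\<forall>y'\<in>Y. depth r par y2 \<le> depth r par y')"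
  then have "anc V par y1 y2 \<or> anc V par y2 y1" using assms(2) anc_linear by blast
  then show "y1 = y2" using y1 y2 anc_depth_less by (metis leD)
qed

definition subtree_root :: "'a set \<Rightarrow> 'a \<Rightarrow> bool" where
  "subtree_root S \<rho> \<longleftrightarrow>
     \<rho> \<in> S \<and> (\<forall>x\<in>S. anc V par \<rho> x \<and> (\<forall>z. anc V par \<rho> z \<and> anc V par z x \<longrightarrow> z \<in> S))"

lemma is_subtree_iff:
  "is_subtree V par S \<longleftrightarrow> S \<subseteq> V \<and> S \<noteq> {} \<and> (\<exists>\<rho>. subtree_root S \<rho>)"
  unfolding is_subtree_def subtree_root_def by blast

lemma is_subtree_V: "is_subtree V par V"
  unfolding is_subtree_def using root_in anc_root anc_in by blast

lemma is_subtree_singleton: "u \<in> V \<Longrightarrow> is_subtree V par {u}"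
  unfolding is_subtree_def using anc_refl anc_antisym by blast

lemma subtree_rootD:
  assumes "subtree_root S \<rho>"
  shows "\<rho> \<in> S" "x \<in> S \<Longrightarrow> anc V par \<rho> x"
    "x \<in> S \<Longrightarrow> anc V par \<rho> z \<Longrightarrow> anc V par z x \<Longrightarrow> z \<in> S"
  using assms unfolding subtree_root_def by blast+

lemma subtree_root_Un:
  assumes \<rho>1: "subtree_root S1 \<rho>1" and \<rho>2: "subtree_root S2 \<rho>2" and x: "x \<in> S1" "x \<in> S2"
    and \<rho>12: "anc V par \<rho>1 \<rho>2"
  shows "subtree_root (S1 \<union> S2) \<rho>1"
  unfolding subtree_root_def
proof (intro conjI ballI allI impI)
  show "\<rho>1 \<in> S1 \<union> S2" using subtree_rootD(1)[OF \<rho>1] by simp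
  fix y assume y: "y \<in> S1 \<union> S2"
  then show "anc V par \<rho>1 y"
    using subtree_rootD(2)[OF \<rho>1, of y] subtree_rootD(2)[OF \<rho>2, of y] anc_trans[OF \<rho>12, of y]
    by blast
  fix z assume z: "anc V par \<rho>1 z \<and> anc V par z y"
  show "z \<in> S1 \<union> S2"
  proof (cases "y \<in> S1")
    case True then show ?thesis using subtree_rootD(3)[OF \<rho>1 True, of z] z by simp
  next
    case False
    with y have y2: "y \<in> S2" by simp
    then have "anc V par \<rho>2 y" by (rule subtree_rootD(2)[OF \<rho>2])
    with z consider "anc V par \<rho>2 z" | "anc V par z \<rho>2" using anc_linear[of \<rho>2 y z] by blast
    then show ?thesis
    proof cases
      case 1 then show ?thesis using subtree_rootD(3)[OF \<rho>2 y2, of z] z by simp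
    next
      case 2
      then have "anc V par z x" by (rule anc_trans[OF _ subtree_rootD(2)[OF \<rho>2 x(2)]])
      then show ?thesis using subtree_rootD(3)[OF \<rho>1 x(1), of z] z by simp
    qed
  qed
qed

lemma is_subtree_Un:
  assumes "is_subtree V par S1" "is_subtree V par S2" "S1 \<inter> S2 \<noteq> {}"
  shows "is_subtree V par (S1 \<union> S2)"
proof -
  obtain \<rho>1 \<rho>2 x where \<rho>: "subtree_root S1 \<rho>1" "subtree_root S2 \<rho>2" and x: "x \<in> S1" "x \<in> S2"
    using assms unfolding is_subtree_iff by blast
  then have "anc V par \<rho>1 x" "anc V par \<rho>2 x" unfolding subtree_root_def by blast+
  then consider "anc V par \<rho>1 \<rho>2" | "anc V par \<rho>2 \<rho>1" using anc_linear by blast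
  then obtain \<rho> where "subtree_root (S1 \<union> S2) \<rho>"
  proof cases
    case 1 then show ?thesis using that subtree_root_Un[OF \<rho> x] by blast
  next
    case 2 then show ?thesis using that subtree_root_Un[OF \<rho>(2,1) x(2,1)] by (simp add: Un_commute)
  qed
  then show ?thesis using assms unfolding is_subtree_iff by blast
qed

lemma rt_in:
  assumes "is_subtree V par S"
  shows "rt V par S \<in> S"
proof -
  obtain \<rho> where "\<rho> \<in> S" "\<forall>x\<in>S. anc V par \<rho> x" using assms unfolding is_subtree_def by blast
  then have "\<exists>!\<rho>. \<rho> \<in> S \<and> (\<forall>x\<in>S. anc V par \<rho> x)" by (metis anc_antisym)
  from theI'[OF this] show ?thesis unfolding rt_def by blast
qed

lemma component_subset: "is_component V par A Q \<Longrightarrow> Q \<subseteq> A"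
  unfolding is_component_def by blast

lemma component_exists:
  assumes "A \<subseteq> V" "u \<in> A"
  obtains Q where "is_component V par A Q" "u \<in> Q"
proof -
  let ?Qs = "{Q. Q \<subseteq> A \<and> is_subtree V par Q}"
  have "?Qs \<subseteq> Pow A" by blast
  then have "finite ?Qs" using finite_subset[OF assms(1) finite_V] by (simp add: finite_subset)
  moreover have "{u} \<in> ?Qs" using assms is_subtree_singleton by auto
  ultimately have "\<exists>Q\<in>?Qs. {u} \<subseteq> Q \<and> (\<forall>Q'\<in>?Qs. Q \<subseteq> Q' \<longrightarrow> Q = Q')"
    by (rule finite_has_maximal2)
  then obtain Q where "Q \<in> ?Qs" "{u} \<subseteq> Q" "\<forall>Q'\<in>?Qs. Q \<subseteq> Q' \<longrightarrow> Q = Q'"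
    by blast
  then have "is_component V par A Q" "u \<in> Q" unfolding is_component_def by auto
  then show ?thesis by (rule that)
qed

lemma component_absorbs:
  assumes "is_component V par A Q" "is_subtree V par B" "B \<subseteq> A" "Q \<inter> B \<noteq> {}"
  shows "B \<subseteq> Q"
proof -
  have "is_subtree V par Q" "Q \<subseteq> A" using assms(1) unfolding is_component_def by auto
  then have "is_subtree V par (Q \<union> B)" "Q \<union> B \<subseteq> A"
    using assms(2-4) is_subtree_Un by auto
  then show ?thesis using assms(1) unfolding is_component_def by blast
qed

lemma prefix_tpath:
  assumes "u \<in> V" "v \<in> V" and y: "(par ^^ m) u = y" "\<not> anc V par y v"
  shows "prefix (map (\<lambda>i. (par ^^ i) u) [0..<Suc (Suc m)]) (tpath V r par u v)"
proof -
  let ?f = "\<lambda>i. (par ^^ i) u"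
  have "m < depth r par u"
  proof (rule ccontr)
    assume "\<not> m < depth r par u"
    then have "y = r" using y(1) funpow_par_root_mono[OF funpow_depth[OF assms(1)]] by simp
    then show False using y(2) anc_root[OF assms(2)] by simp
  qed
  then have "[0..<Suc (depth r par u)] = [0..<Suc m] @ [Suc m..<Suc (depth r par u)]"
    using upt_add_eq_append[of 0 "Suc m" "depth r par u - m"] by simp
  moreover have "[Suc m..<Suc (depth r par u)] = Suc m # [Suc (Suc m)..<Suc (depth r par u)]"
    using \<open>m < depth r par u\<close> by (intro upt_conv_Cons) simp
  ultimately have anc_list: "anc_list r par u =
      map ?f [0..<Suc m] @ ?f (Suc m) # map ?f [Suc (Suc m)..<Suc (depth r par u)]"
    unfolding anc_list_def by simp
  have "\<not> anc V par (?f i) v" if "i \<le> m" for i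
  proof
    assume "anc V par (?f i) v"
    moreover have "anc V par y (?f i)"
      using that y(1) funpow_par_in[OF assms(1)] unfolding anc_def
      by (metis funpow_add comp_apply le_add_diff_inverse2)
    ultimately show False using y(2) by (metis anc_trans)
  qed
  then have "\<forall>x\<in>set (map ?f [0..<Suc m]). \<not> anc V par x v" by auto
  from prefix_takeWhile_hd_dropWhile[OF this] show ?thesis
    unfolding tpath_def anc_list by simp
qed

lemma subseq_ancestor_parent_tpath:
  assumes "u \<in> V" "v \<in> V" "anc V par y u" "\<not> anc V par y v"
  shows "subseq (remdups_adj [u, y, par y]) (tpath V r par u v)"
proof -
  obtain m where m: "(par ^^ m) u = y" using assms(3) unfolding anc_def by blast
  have "subseq (remdups_adj [u, y, par y]) (map (\<lambda>i. (par ^^ i) u) [0..<Suc (Suc m)])"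
    using subseq_remdups_adj_map_upt[of "\<lambda>i. (par ^^ i) u" m] m by simp
  moreover have "prefix (map (\<lambda>i. (par ^^ i) u) [0..<Suc (Suc m)]) (tpath V r par u v)"
    using prefix_tpath[OF assms(1,2) m assms(4)] .
  ultimately show ?thesis using prefix_imp_subseq subseq_order.trans by blast
qed

end

section \<open>The sets C_R\<close>

lemma bd_in:
  assumes "bd V r par c1 S d v = Some b"
  shows "b \<in> S"
proof -
  let ?P = "\<lambda>i. onP V r par c1 S v i \<and> balanced V r par c1 S d ((c1 ^^ i) v)"
  have ex: "\<exists>i. ?P i"
    using assms unfolding bd_def by (metis option.distinct(1))
  then have b: "b = (c1 ^^ (LEAST i. ?P i)) v"
    using assms unfolding bd_def by (simp only: if_True option.inject)
  have "?P (LEAST i. ?P i)" using ex by (rule LeastI_ex)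
  then show ?thesis unfolding b onP_def by blast
qed

lemma cv_mem_in: "cv_mem V r par c1 S d x \<Longrightarrow> x \<in> S"
  by (induction rule: cv_mem.induct) (simp_all add: bd_in rsub_def)

locale heavy_tree = parent_tree V r par
  for V :: "'a set" and r :: 'a and par :: "'a \<Rightarrow> 'a" +
  fixes c1 :: "'a \<Rightarrow> 'a"
  assumes heavy: "heavy_choice V r par c1"
begin

lemma heavy_child:
  assumes "x \<in> V" "children V r par x \<noteq> {}"
  shows "c1 x \<in> V" "c1 x \<noteq> r" "par (c1 x) = x"
  using heavy assms unfolding heavy_choice_def children_def by blast+

lemma depth_onP:
  assumes "onP V r par c1 S v i" "S \<subseteq> V" "j \<le> i"
  shows "depth r par ((c1 ^^ j) v) = depth r par v + j"
  using assms(3)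
proof (induction j)
  case (Suc j)
  let ?w = "(c1 ^^ j) v"
  have "?w \<in> V" "children V r par ?w \<noteq> {}"
    using assms(1,2) Suc.prems unfolding onP_def by auto
  then show ?case using Suc depth_par[of "c1 ?w"] heavy_child[of ?w] by simp
qed simp

lemma onP_less_card:
  assumes "onP V r par c1 S v i" "S \<subseteq> V"
  shows "i < card S"
proof -
  let ?P = "(\<lambda>j. (c1 ^^ j) v) ` {..i}"
  have "inj_on (\<lambda>j. (c1 ^^ j) v) {..i}"
    by (rule inj_onI) (metis depth_onP[OF assms] atMost_iff add_left_cancel)
  then have "Suc i = card ?P" by (simp add: card_image)
  also have "\<dots> \<le> card S"
    using assms finite_subset[OF assms(2) finite_V] unfolding onP_def by (intro card_mono) auto
  finally show ?thesis by simp
qed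

lemma lv_in:
  assumes "v \<in> S" "S \<subseteq> V"
  shows "lv V r par c1 S v \<in> S"
proof -
  have "onP V r par c1 S v 0" using assms(1) unfolding onP_def by simp
  then have "onP V r par c1 S v (GREATEST i. onP V r par c1 S v i)"
    using onP_less_card[OF _ assms(2)] by (metis GreatestI_ex_nat less_imp_le)
  then show ?thesis unfolding lv_def onP_def by blast
qed

lemma CR_subset:
  assumes "is_subtree V par S"
  shows "CR V r par c1 k S \<subseteq> S"
proof -
  have "rt V par S \<in> S" "S \<subseteq> V" using assms rt_in unfolding is_subtree_def by auto
  then show ?thesis unfolding CR_def using lv_in cv_mem_in by auto
qed

lemma rt_in_CR: "is_subtree V par S \<Longrightarrow> rt V par S \<in> CR V r par c1 k S"
  unfolding CR_def using rt_in by auto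

end

section \<open>Canonical subtrees\<close>

locale canonical_subtrees = heavy_tree V r par c1
  for V :: "'a set" and r :: 'a and par :: "'a \<Rightarrow> 'a" and c1 :: "'a \<Rightarrow> 'a" +
  fixes k :: nat
begin

abbreviation canon :: "'a set \<Rightarrow> bool" where
  "canon \<equiv> canonical V r par c1 k"

abbreviation C :: "'a set \<Rightarrow> 'a set" where
  "C \<equiv> CR V r par c1 k"

definition separated :: "'a set \<Rightarrow> 'a set \<Rightarrow> bool" where
  "separated A B \<longleftrightarrow> A = B \<or> A \<inter> B = {} \<or> A \<subseteq> B - C B \<or> B \<subseteq> A - C A"

lemma canonical_is_subtree: "canon S \<Longrightarrow> is_subtree V par S"
  by (induction rule: canonical.induct) (auto simp: is_subtree_V is_component_def)

lemma canonical_eq_V_or_subset: "canon B \<Longrightarrow> B = V \<or> B \<subseteq> V - C V"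
proof (induction rule: canonical.induct)
  case (can_comp B0 B)
  then show ?case using component_subset[OF can_comp.hyps(2)] by blast
qed simp

lemma canonical_separated:
  assumes "canon A" "canon B"
  shows "separated A B"
  using assms
proof (induction A arbitrary: B rule: canonical.induct)
  case can_T
  then show ?case using canonical_eq_V_or_subset unfolding separated_def by blast
next
  case (can_comp A0 A)
  have cA: "canon A" using can_comp.hyps by (rule canonical.can_comp)
  have cmpA: "is_component V par (A0 - C A0) A" by (rule can_comp.hyps(2))
  have A: "A \<subseteq> A0 - C A0" using component_subset[OF cmpA] .
  note sep_A0 = can_comp.IH
  show ?case using \<open>canon B\<close>
  proof (induction B rule: canonical.induct)
    case can_T
    then show ?case using canonical_eq_V_or_subset[OF cA] unfolding separated_def by blast
  next
    case (can_comp B0 B)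
    have cB: "canon B" using can_comp.hyps by (rule canonical.can_comp)
    have B: "B \<subseteq> B0 - C B0" using component_subset[OF can_comp.hyps(2)] .
    have "separated A0 B" using cB by (rule sep_A0)
    then consider "A0 = B" | "A0 \<inter> B = {}" | "A0 \<subseteq> B - C B" | "B \<subseteq> A0 - C A0"
      unfolding separated_def by blast
    then show ?case
    proof cases
      case 4
      show ?thesis
      proof (cases "A \<inter> B = {}")
        case False
        have "B \<subseteq> A" using component_absorbs[OF cmpA canonical_is_subtree[OF cB] 4] False by blast
        from \<open>separated A B0\<close>
        consider "A = B0" | "A \<inter> B0 = {}" | "A \<subseteq> B0 - C B0" | "B0 \<subseteq> A - C A"
          unfolding separated_def by blast
        then show ?thesis
        proof cases
          case 3
          have "A \<subseteq> B" using component_absorbs[OF can_comp.hyps(2) canonical_is_subtree[OF cA] 3]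
            False by blast
          then show ?thesis using \<open>B \<subseteq> A\<close> unfolding separated_def by blast
        qed (use B \<open>B \<subseteq> A\<close> False in \<open>auto simp: separated_def\<close>)
      qed (simp add: separated_def)
    qed (use A in \<open>auto simp: separated_def\<close>)
  qed
qed

lemma ex_canonical_CR:
  "canon S \<Longrightarrow> u \<in> S \<Longrightarrow> \<exists>S'. canon S' \<and> u \<in> C S'"
proof (induction "card S" arbitrary: S rule: less_induct)
  case less
  show ?case
  proof (cases "u \<in> C S")
    case False
    have S: "is_subtree V par S" using less.prems(1) by (rule canonical_is_subtree)
    then have "S - C S \<subseteq> V" unfolding is_subtree_def by blast
    then obtain Q where Q: "is_component V par (S - C S) Q" "u \<in> Q"
      using component_exists False less.prems(2) by blast
    have "Q \<subset> S" using component_subset[OF Q(1)] rt_in_CR[OF S] rt_in[OF S] by blast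
    then have "card Q < card S"
      using S finite_V unfolding is_subtree_def by (meson psubset_card_mono finite_subset)
    then show ?thesis using less.hyps canonical.can_comp[OF less.prems(1) Q(1)] Q(2) by blast
  qed (use less.prems in blast)
qed

lemma canonical_CR_unique:
  assumes "canon S1" "canon S2" "u \<in> C S1" "u \<in> C S2"
  shows "S1 = S2"
proof -
  have "u \<in> S1" "u \<in> S2" using assms CR_subset canonical_is_subtree by blast+
  then show ?thesis using canonical_separated[OF assms(1,2)] assms(3,4) unfolding separated_def by blast
qed

lemma Tup_canonical:
  assumes "u \<in> V"
  shows "canon (Tup V r par c1 k u)" "u \<in> C (Tup V r par c1 k u)"
proof -
  have "\<exists>!S. canon S \<and> u \<in> C S"
    using ex_canonical_CR[OF canonical.can_T assms] canonical_CR_unique by blast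
  from theI'[OF this] show "canon (Tup V r par c1 k u)" "u \<in> C (Tup V r par c1 k u)"
    unfolding Tup_def by blast+
qed

lemma case3_y_in_case3_Y:
  assumes "u \<in> V" "\<not> anc V par u v"
  shows "case3_y V r par c1 k u v \<in> case3_Y V r par c1 k u v"
proof -
  have "u \<in> case3_Y V r par c1 k u v"
    unfolding case3_Y_def using Tup_canonical(2)[OF assms(1)] anc_refl[OF assms(1)] assms(2) by blast
  then have "\<exists>!y. y \<in> case3_Y V r par c1 k u v \<and>
      (\<forall>y'\<in>case3_Y V r par c1 k u v. depth r par y \<le> depth r par y')"
    by (rule ex1_highest_ancestor[where u = u]) (simp add: case3_Y_def)
  from theI'[OF this] show ?thesis unfolding case3_y_def by blast
qed

end

theorem lemma10:
  fixes V :: "'a set" and r :: 'a and par :: "'a \<Rightarrow> 'a" and c1 :: "'a \<Rightarrow> 'a"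
    and k :: nat and u v :: 'a
  assumes "rooted_tree V r par"
    and "heavy_choice V r par c1"
    and "k \<ge> 4"
    and "u \<in> V" and "v \<in> V"
    and "\<not> anc V par u v" and "\<not> anc V par v u"
    and "case3_X V r par c1 k u v = {}"
  shows "subseq (remdups_adj [u, case3_y V r par c1 k u v, par (case3_y V r par c1 k u v)])
                (tpath V r par u v)"
proof -
  interpret canonical_subtrees V r par c1 k
    using assms(1,2) by unfold_locales
  have "case3_y V r par c1 k u v \<in> case3_Y V r par c1 k u v"
    using case3_y_in_case3_Y assms(4,6) by blast
  then show ?thesis using subseq_ancestor_parent_tpath[OF assms(4,5)] unfolding case3_Y_def by blast
qed

end
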